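(* Let $\sigma$ be an erasing $k$-block substitution with $w_\epsilon\ne 1^k$. Then $f_\sigma$ is continuous at every point of $$\mathcal C^\sigma=\mathbb I\setminus(\mathcal Q_2^0\cup\mathcal E^\sigma),$$ whose complement is countable, and consequently $f_\sigma$ is of Baire class 1. Moreover, $f_\sigma$ is left-continuous at every point of $\mathbb Q_2\setminus\{0\}$.
   Context: Notation: $\mathbb I=[0,1]$. $\mathbb Q_2$ is the set of dyadic rationals in $\mathbb I$, $\mathcal Q_2=\mathbb Q_2\setminus\{0,1\}$ and $\mathcal Q_2^0=\mathcal Q_2\cup\{0\}$. $\{0,1\}^*$ and $\{0,1\}^\omega$ denote finite and infinite binary words, and $\epsilon$ is the empty word. For a word $w$, set $0.w=\sum_i w_i2^{-i}$. For $x\in(0,1]$, $\widetilde x$ is the unique infinite binary expansion of $x$ not ending in $0^\infty$. Fix $k\ge2$. An erasing $k$-block substitution is a map $\sigma:\{0,1\}^k\to\{0,1\}^*$ with exactly one block $w_\epsilon$ such that $\sigma(w_\epsilon)=\epsilon$. It acts blockwise on infinite words and on finite words of length a multiple of $k$, by concatenating the images of consecutive $k$-blocks. The map $f_\sigma:\mathbb I\to\mathbb I$ is defined by $f_\sigma(x)=0.\sigma(\widetilde x)$ if $x\in(0,1]$ and $\widetilde x\ne w_\epsilon^\infty$, and $f_\sigma(x)=0$ if $x=0$ or $\widetilde x=w_\epsilon^\infty$. Define $\mathcal E^\sigma=\{x\in\mathbb I\cap\mathbb Q: x=0.vw_\epsilon^\infty \text{ for some } v\in\{0,1\}^{nk},\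 n\in\mathbb N_0\}$. *)

theory Defs
  imports "HOL-Analysis.Analysis"
begin

(* Binary words: finite words are bool lists, infinite words are nat => bool
   (True = digit 1, False = digit 0). *)

definition bit :: "bool \<Rightarrow> real" where
  "bit b = (if b then 1 else 0)"

definition bin_val :: "bool list \<Rightarrow> real" where
  "bin_val w = (\<Sum>i<length w. bit (w ! i) / 2 ^ (i + 1))"

definition bin_val_inf :: "(nat \<Rightarrow> bool) \<Rightarrow> real" where
  "bin_val_inf w = (\<Sum>i. bit (w i) / 2 ^ (i + 1))"

definition tilde :: "real \<Rightarrow> (nat \<Rightarrow> bool)" where
  "tilde x = (THE w. \<not> (\<forall>\<^sub>F i in sequentially. \<not> w i) \<and> bin_val_inf w = x)"

definition block :: "nat \<Rightarrow> (nat \<Rightarrow> bool) \<Rightarrow> nat \<Rightarrow> bool list" where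
  "block k w j = map (\<lambda>i. w (k * j + i)) [0..<k]"

definition erasing_subst :: "nat \<Rightarrow> (bool list \<Rightarrow> bool list) \<Rightarrow> bool" where
  "erasing_subst k \<sigma> \<longleftrightarrow> (\<exists>!u. length u = k \<and> \<sigma> u = [])"

definition w_eps :: "nat \<Rightarrow> (bool list \<Rightarrow> bool list) \<Rightarrow> bool list" where
  "w_eps k \<sigma> = (THE u. length u = k \<and> \<sigma> u = [])"

definition per_word :: "bool list \<Rightarrow> bool list \<Rightarrow> nat \<Rightarrow> bool" where
  "per_word v u i = (if i < length v then v ! i else u ! ((i - length v) mod length u))"

(* 0.sigma(w): the value of the (finite or infinite) concatenation of the images of the
   consecutive k-blocks, i.e. the limit of the values of the finite prefixes
   sigma(b_0)...sigma(b_{n-1}) *)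
definition subst_val :: "nat \<Rightarrow> (bool list \<Rightarrow> bool list) \<Rightarrow> (nat \<Rightarrow> bool) \<Rightarrow> real" where
  "subst_val k \<sigma> w = lim (\<lambda>n. bin_val (concat (map (\<lambda>j. \<sigma> (block k w j)) [0..<n])))"

definition f_sigma :: "nat \<Rightarrow> (bool list \<Rightarrow> bool list) \<Rightarrow> real \<Rightarrow> real" where
  "f_sigma k \<sigma> x =
     (if x \<in> {0<..1} \<and> tilde x \<noteq> per_word [] (w_eps k \<sigma>)
      then subst_val k \<sigma> (tilde x) else 0)"

definition Q2 :: "real set" where
  "Q2 = {x \<in> {0..1}. \<exists>m n :: nat. x = real m / 2 ^ n}"

definition Q2_0 :: "real set" where
  "Q2_0 = (Q2 - {0, 1}) \<union> {0}"

definition E_sigma :: "nat \<Rightarrow> (bool list \<Rightarrow> bool list) \<Rightarrow> real set" where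
  "E_sigma k \<sigma> = {x \<in> {0..1} \<inter> \<rat>. \<exists>v n. length v = n * k \<and>
                     x = bin_val_inf (per_word v (w_eps k \<sigma>))}"

definition C_sigma :: "nat \<Rightarrow> (bool list \<Rightarrow> bool list) \<Rightarrow> real set" where
  "C_sigma k \<sigma> = {0..1} - (Q2_0 \<union> E_sigma k \<sigma>)"

definition baire_class_1 :: "(real \<Rightarrow> real) \<Rightarrow> bool" where
  "baire_class_1 f \<longleftrightarrow> (\<exists>g :: nat \<Rightarrow> real \<Rightarrow> real.
      (\<forall>n. continuous_on {0..1} (g n)) \<and>
      (\<forall>x \<in> {0..1}. (\<lambda>n. g n x) \<longlonglongrightarrow> f x))"

end

theory Submission
  imports Defs
begin

text \<open>The first \<open>n\<close> digits of \<open>tilde x\<close> depend only on \<open>\<lceil>x 2\<^sup>n\<rceil>\<close>, so they are constant on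
  the dyadic interval \<open>](c - 1)/2\<^sup>n, c/2\<^sup>n]\<close> containing \<open>x\<close>. If \<open>tilde x\<close> has infinitely many
  \<open>k\<close>-blocks other than \<open>w\<^sub>\<epsilon>\<close>, the images of its first \<open>N\<close> blocks form a word of any
  prescribed length \<open>m\<close>, and this word, hence \<open>f\<^sub>\<sigma>\<close> up to \<open>2\<^sup>-\<^sup>m\<close>, is shared by every point of
  the dyadic interval of level \<open>N k\<close> around \<open>x\<close>. That interval is a left neighbourhood of \<open>x\<close>,
  and a two-sided one when \<open>x\<close> is not dyadic. Points outside \<open>E\<^sup>\<sigma>\<close> have infinitely many such
  blocks, because otherwise their expansion would be eventually \<open>w\<^sub>\<epsilon>\<^sup>\<infinity>\<close>; so do the dyadic
  points, whose expansions end in \<open>1\<^sup>\<infinity>\<close> while \<open>w\<^sub>\<epsilon> \<noteq> 1\<^sup>k\<close>. The exceptional set consists of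
  rationals, and a function continuous off a countable subset of \<open>[0,1]\<close> is the pointwise limit
  of piecewise-linear interpolants on grids that eventually contain each exceptional point.\<close>

subsection \<open>Binary expansions\<close>

definition bin_val_prefix :: "(nat \<Rightarrow> bool) \<Rightarrow> nat \<Rightarrow> real" where
  "bin_val_prefix w n = (\<Sum>i<n. bit (w i) / 2 ^ (i + 1))"

lemma bit_nonneg [simp]: "0 \<le> bit b" and bit_le_1 [simp]: "bit b \<le> 1"
  by (auto simp: bit_def)

lemma summable_half_powers: "summable (\<lambda>i. (1/2::real) ^ Suc i)"
  using power_half_series sums_summable by blast

lemma summable_bin_digits: "summable (\<lambda>i. bit (w i) / 2 ^ (i + 1))"
  by (rule summable_comparison_test[OF _ summable_half_powers]) (auto simp: bit_def power_one_over)

lemma bin_val_prefix_LIMSEQ: "bin_val_prefix w \<longlonglongrightarrow> bin_val_inf w"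
  unfolding bin_val_prefix_def bin_val_inf_def using summable_LIMSEQ[OF summable_bin_digits] .

lemma bin_val_inf_le_1: "bin_val_inf w \<le> 1"
proof -
  have "bin_val_inf w \<le> (\<Sum>i. (1/2::real) ^ Suc i)"
    unfolding bin_val_inf_def
    by (rule suminf_le[OF _ summable_bin_digits summable_half_powers]) (simp add: bit_def power_one_over)
  also have "\<dots> = 1" using power_half_series sums_unique by metis
  finally show ?thesis .
qed

lemma bin_val_inf_pos: "w i \<Longrightarrow> 0 < bin_val_inf w"
  unfolding bin_val_inf_def by (rule suminf_pos2[OF summable_bin_digits, of _ i]) (auto simp: bit_def)

lemma bin_val_inf_split:
  "bin_val_inf w = bin_val_prefix w n + bin_val_inf (\<lambda>i. w (i + n)) / 2 ^ n"
proof -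
  have "bin_val_inf w = (\<Sum>i. bit (w (i + n)) / 2 ^ (i + n + 1)) + bin_val_prefix w n"
    unfolding bin_val_inf_def bin_val_prefix_def
    by (rule suminf_split_initial_segment[OF summable_bin_digits])
  also have "(\<lambda>i. bit (w (i + n)) / 2 ^ (i + n + 1)) = (\<lambda>i. (bit (w (i + n)) / 2 ^ (i + 1)) / 2 ^ n)"
    by (simp add: power_add mult_ac)
  also have "suminf \<dots> = bin_val_inf (\<lambda>i. w (i + n)) / 2 ^ n"
    unfolding bin_val_inf_def by (rule suminf_divide[OF summable_bin_digits])
  finally show ?thesis by simp
qed

lemma bin_val_prefix_Suc_scaled:
  "bin_val_prefix w (Suc n) * 2 ^ Suc n = 2 * (bin_val_prefix w n * 2 ^ n) + bit (w n)"
  by (simp add: bin_val_prefix_def algebra_simps)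

lemma bin_val_prefix_scaled_int: "\<exists>m::int. bin_val_prefix w n * 2 ^ n = of_int m"
proof (induction n)
  case (Suc n)
  then obtain m where m: "bin_val_prefix w n * 2 ^ n = of_int m" by blast
  show ?case
    by (intro exI[of _ "2 * m + (if w n then 1 else 0)"], subst bin_val_prefix_Suc_scaled)
       (simp add: m bit_def)
qed (simp add: bin_val_prefix_def)

text \<open>For an expansion with infinitely many ones the prefix value lies strictly below the
  value, so it is the dyadic number of precision \<open>n\<close> just below it.\<close>
lemma bin_val_prefix_scaled_eq_ceiling:
  assumes "\<exists>\<^sub>F i in sequentially. w i"
  shows "bin_val_prefix w n * 2 ^ n = of_int \<lceil>bin_val_inf w * 2 ^ n\<rceil> - 1"
proof -
  obtain m where m: "bin_val_prefix w n * 2 ^ n = of_int m"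
    using bin_val_prefix_scaled_int by blast
  obtain i where "n \<le> i" "w i" using assms by (auto simp: frequently_sequentially)
  then have "0 < bin_val_inf (\<lambda>j. w (j + n))" by (intro bin_val_inf_pos[of _ "i - n"]) simp
  with bin_val_inf_split[of w n] bin_val_inf_le_1[of "\<lambda>j. w (j + n)"]
  have "bin_val_prefix w n * 2 ^ n < bin_val_inf w * 2 ^ n"
       "bin_val_inf w * 2 ^ n \<le> bin_val_prefix w n * 2 ^ n + 1"
    by (simp_all add: field_simps)
  then have "\<lceil>bin_val_inf w * 2 ^ n\<rceil> = m + 1" by (simp add: m ceiling_eq_iff)
  then show ?thesis by (simp add: m)
qed

text \<open>The digit is \<open>1\<close> iff \<open>x\<close> lies in the right half of its dyadic interval of level \<open>n\<close>.\<close>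
definition bin_digit :: "real \<Rightarrow> nat \<Rightarrow> bool" where
  "bin_digit x n \<longleftrightarrow> \<lceil>x * 2 ^ Suc n\<rceil> = 2 * \<lceil>x * 2 ^ n\<rceil>"

lemma ceiling_double_cases:
  fixes t :: real
  shows "\<lceil>2 * t\<rceil> = 2 * \<lceil>t\<rceil> - 1 \<or> \<lceil>2 * t\<rceil> = 2 * \<lceil>t\<rceil>"
proof -
  have "2 * of_int \<lceil>t\<rceil> - 2 < 2 * t" "2 * t \<le> 2 * of_int \<lceil>t\<rceil>" by linarith+
  then show ?thesis by linarith
qed

lemma bit_bin_digit:
  "bit (bin_digit x n) = of_int (\<lceil>x * 2 ^ Suc n\<rceil> - 2 * \<lceil>x * 2 ^ n\<rceil> + 1)"
  using ceiling_double_cases[of "x * 2 ^ n"] by (auto simp: bin_digit_def bit_def mult_ac)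

lemma bin_digit_bin_val_inf:
  assumes "\<exists>\<^sub>F i in sequentially. w i"
  shows "bin_digit (bin_val_inf w) n = w n"
proof -
  have "bit (w n) = bin_val_prefix w (Suc n) * 2 ^ Suc n - 2 * (bin_val_prefix w n * 2 ^ n)"
    using bin_val_prefix_Suc_scaled[of w n] by linarith
  also have "\<dots> = bit (bin_digit (bin_val_inf w) n)"
    by (simp only: bit_bin_digit bin_val_prefix_scaled_eq_ceiling[OF assms]) simp
  finally show ?thesis by (simp add: bit_def split: if_splits)
qed

lemma bin_val_prefix_bin_digit:
  assumes "0 < x" "x \<le> 1"
  shows "bin_val_prefix (bin_digit x) n * 2 ^ n = of_int \<lceil>x * 2 ^ n\<rceil> - 1"
proof (induction n)
  case 0
  have "\<lceil>x\<rceil> = 1" using assms by (simp add: ceiling_eq_iff)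
  then show ?case by (simp add: bin_val_prefix_def)
next
  case (Suc n)
  show ?case by (subst bin_val_prefix_Suc_scaled) (simp add: Suc bit_bin_digit)
qed

lemma bin_digit_expansion:
  assumes "0 < x" "x \<le> 1"
  shows "\<exists>\<^sub>F i in sequentially. bin_digit x i" "bin_val_inf (bin_digit x) = x"
proof -
  have prefix: "bin_val_prefix (bin_digit x) n = (of_int \<lceil>x * 2 ^ n\<rceil> - 1) / 2 ^ n" for n
    using bin_val_prefix_bin_digit[OF assms, of n] by (simp add: field_simps)
  have below: "bin_val_prefix (bin_digit x) n < x" for n
    unfolding prefix by (simp add: divide_less_eq) linarith
  have "bin_val_prefix (bin_digit x) \<longlonglongrightarrow> x"
  proof (rule tendsto_sandwich[where f = "\<lambda>n. x - (1/2) ^ n" and h = "\<lambda>n. x"])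
    show "\<forall>\<^sub>F n in sequentially. x - (1/2) ^ n \<le> bin_val_prefix (bin_digit x) n"
      unfolding prefix by (simp add: field_simps power_one_over)
    show "(\<lambda>n. x - (1/2) ^ n) \<longlonglongrightarrow> x"
      using tendsto_diff[OF tendsto_const LIMSEQ_power_zero[of "1/2::real"]] by simp
  qed (simp_all add: below less_imp_le)
  then show val: "bin_val_inf (bin_digit x) = x"
    using bin_val_prefix_LIMSEQ LIMSEQ_unique by blast
  show "\<exists>\<^sub>F i in sequentially. bin_digit x i"
  proof (rule ccontr)
    assume "\<not> (\<exists>\<^sub>F i in sequentially. bin_digit x i)"
    then obtain N where N: "\<And>i. N \<le> i \<Longrightarrow> \<not> bin_digit x i"
      by (auto simp: frequently_sequentially)
    have "bin_val_inf (\<lambda>i. bin_digit x (i + N)) = 0"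
      by (simp add: bin_val_inf_def bit_def N)
    then show False using bin_val_inf_split[of "bin_digit x" N] below[of N] val by simp
  qed
qed

lemma tilde_eq_bin_digit:
  assumes "0 < x" "x \<le> 1"
  shows "tilde x = bin_digit x"
  unfolding tilde_def frequently_def[symmetric]
proof (rule the_equality)
  fix w assume "(\<exists>\<^sub>F i in sequentially. w i) \<and> bin_val_inf w = x"
  then show "w = bin_digit x" by (auto simp: bin_digit_bin_val_inf)
qed (use bin_digit_expansion[OF assms] in auto)

lemma tilde_expansion:
  assumes "0 < x" "x \<le> 1"
  shows "\<exists>\<^sub>F i in sequentially. tilde x i" "bin_val_inf (tilde x) = x"
  using bin_digit_expansion[OF assms] by (simp_all add: tilde_eq_bin_digit[OF assms])

lemma ceiling_scaled_by_power:
  fixes x :: real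
  assumes "m \<le> n"
  shows "\<lceil>x * 2 ^ m\<rceil> = - (- \<lceil>x * 2 ^ n\<rceil> div 2 ^ (n - m))"
proof -
  have "(2::real) ^ n = 2 ^ m * 2 ^ (n - m)"
    using assms by (simp flip: power_add)
  then have "- (x * 2 ^ m) = - (x * 2 ^ n) / real_of_int (2 ^ (n - m))"
    by simp
  also have "\<lfloor>\<dots>\<rfloor> = \<lfloor>- (x * 2 ^ n)\<rfloor> div 2 ^ (n - m)"
    by (rule floor_divide_real_eq_div) simp
  finally show ?thesis
    by (simp add: ceiling_def)
qed

lemma tilde_agree:
  assumes "0 < x" "x \<le> 1" "0 < y" "y \<le> 1" "\<lceil>x * 2 ^ n\<rceil> = \<lceil>y * 2 ^ n\<rceil>" "i < n"
  shows "tilde x i = tilde y i"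
proof -
  have "\<lceil>x * 2 ^ m\<rceil> = \<lceil>y * 2 ^ m\<rceil>" if "m \<le> n" for m
    using that assms(5) by (simp only: ceiling_scaled_by_power)
  then show ?thesis
    using assms(6) by (simp only: tilde_eq_bin_digit assms(1-4) bin_digit_def)
qed

subsection \<open>Block substitutions\<close>

lemma bin_val_snoc: "bin_val (xs @ [b]) = bin_val xs + bit b / 2 ^ (length xs + 1)"
  unfolding bin_val_def by (simp add: nth_append)

lemma bin_val_append: "bin_val (xs @ ys) = bin_val xs + bin_val ys / 2 ^ length xs"
proof (induction ys rule: rev_induct)
  case (snoc b ys)
  then show ?case
    by (simp add: bin_val_snoc append_assoc[symmetric] del: append_assoc)
       (simp add: power_add field_simps)
qed (simp add: bin_val_def)

lemma bin_val_nonneg: "0 \<le> bin_val xs"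
  unfolding bin_val_def by (intro sum_nonneg) simp

lemma bin_val_le_1: "bin_val xs \<le> 1"
proof -
  have "bin_val xs \<le> 1 - 1 / 2 ^ length xs"
  proof (induction xs rule: rev_induct)
    case (snoc b xs)
    have "bit b / 2 ^ (length xs + 1) \<le> 1 / 2 ^ (length xs + 1)"
      by (simp add: divide_right_mono)
    with snoc show ?case by (simp add: bin_val_snoc)
  qed (simp add: bin_val_def)
  moreover have "0 \<le> 1 / (2::real) ^ length xs" by simp
  ultimately show ?thesis by linarith
qed

lemma bin_val_append_bounds:
  "bin_val xs \<le> bin_val (xs @ ys)" "bin_val (xs @ ys) \<le> bin_val xs + 1 / 2 ^ length xs"
  unfolding bin_val_append using bin_val_nonneg[of ys] bin_val_le_1[of ys]
  by (simp_all add: divide_right_mono)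

definition subst_prefix :: "nat \<Rightarrow> (bool list \<Rightarrow> bool list) \<Rightarrow> (nat \<Rightarrow> bool) \<Rightarrow> nat \<Rightarrow> bool list" where
  "subst_prefix k \<sigma> w n = concat (map (\<lambda>j. \<sigma> (block k w j)) [0..<n])"

lemma subst_prefix_Suc: "subst_prefix k \<sigma> w (Suc n) = subst_prefix k \<sigma> w n @ \<sigma> (block k w n)"
  by (simp add: subst_prefix_def)

lemma subst_prefix_mono: "m \<le> n \<Longrightarrow> \<exists>ys. subst_prefix k \<sigma> w n = subst_prefix k \<sigma> w m @ ys"
proof (induction n rule: dec_induct)
  case (step n)
  then show ?case by (auto simp: subst_prefix_Suc)
qed simp

lemma subst_prefix_cong:
  assumes "\<And>i. i < n * k \<Longrightarrow> w i = w' i"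
  shows "subst_prefix k \<sigma> w n = subst_prefix k \<sigma> w' n"
proof -
  have "k * j + i < n * k" if "j < n" "i < k" for i j
  proof -
    have "k * j + i < k * (j + 1)" using that(2) by simp
    also have "\<dots> \<le> k * n" using that(1) by (intro mult_le_mono2) simp
    finally show ?thesis by (simp add: mult.commute)
  qed
  then have "block k w j = block k w' j" if "j < n" for j
    using that assms by (auto simp: block_def)
  then show ?thesis unfolding subst_prefix_def by (intro arg_cong[where f = concat] map_cong) auto
qed

lemma subst_prefix_length_unbounded:
  assumes "infinite {j. \<sigma> (block k w j) \<noteq> []}"
  shows "\<exists>n. m \<le> length (subst_prefix k \<sigma> w n)"
proof (induction m)
  case (Suc m)
  then obtain n where n: "m \<le> length (subst_prefix k \<sigma> w n)" by blast
  obtain j where j: "n \<le> j" "\<sigma> (block k w j) \<noteq> []"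
    using assms by (auto simp: infinite_nat_iff_unbounded_le)
  obtain ys where "subst_prefix k \<sigma> w j = subst_prefix k \<sigma> w n @ ys"
    using subst_prefix_mono[OF j(1)] by blast
  then have "Suc m \<le> length (subst_prefix k \<sigma> w (Suc j))"
    using n j(2) by (cases "\<sigma> (block k w j)") (auto simp: subst_prefix_Suc)
  then show ?case by blast
qed simp

text \<open>The prefix values increase, so the \<open>lim\<close> in \<open>subst_val\<close> is a genuine limit.\<close>
lemma subst_val_bounds:
  "bin_val (subst_prefix k \<sigma> w n) \<le> subst_val k \<sigma> w"
  "subst_val k \<sigma> w \<le> bin_val (subst_prefix k \<sigma> w n) + 1 / 2 ^ length (subst_prefix k \<sigma> w n)"
proof -
  let ?a = "\<lambda>n. bin_val (subst_prefix k \<sigma> w n)"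
  have "incseq ?a"
    by (rule incseq_SucI) (simp add: subst_prefix_Suc bin_val_append_bounds(1))
  then obtain L where L: "?a \<longlonglongrightarrow> L"
    using incseq_convergent[of ?a 1] bin_val_le_1 by blast
  then have "subst_val k \<sigma> w = L"
    unfolding subst_val_def subst_prefix_def[symmetric] by (rule limI)
  moreover have "?a n \<le> ?a m" "?a m \<le> ?a n + 1 / 2 ^ length (subst_prefix k \<sigma> w n)" if "n \<le> m" for m
    using subst_prefix_mono[OF that, of k \<sigma> w] bin_val_append_bounds by auto
  ultimately show "?a n \<le> subst_val k \<sigma> w"
    "subst_val k \<sigma> w \<le> ?a n + 1 / 2 ^ length (subst_prefix k \<sigma> w n)"
    using LIMSEQ_le_const[OF L] LIMSEQ_le_const2[OF L] by blast+
qed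

lemma subst_val_close:
  assumes "subst_prefix k \<sigma> w n = subst_prefix k \<sigma> w' n"
  shows "\<bar>subst_val k \<sigma> w - subst_val k \<sigma> w'\<bar> \<le> 1 / 2 ^ length (subst_prefix k \<sigma> w n)"
  using subst_val_bounds[of k \<sigma> w n] subst_val_bounds[of k \<sigma> w' n] assms by (simp add: abs_le_iff)

lemma erasing_subst_w_eps:
  assumes "erasing_subst k \<sigma>"
  shows "length (w_eps k \<sigma>) = k" "\<sigma> (w_eps k \<sigma>) = []"
    and "length u = k \<Longrightarrow> \<sigma> u = [] \<longleftrightarrow> u = w_eps k \<sigma>"
proof -
  have unique: "\<exists>!u. length u = k \<and> \<sigma> u = []" using assms unfolding erasing_subst_def .
  then have "length (w_eps k \<sigma>) = k \<and> \<sigma> (w_eps k \<sigma>) = []"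
    unfolding w_eps_def by (rule theI')
  with unique show "length (w_eps k \<sigma>) = k" "\<sigma> (w_eps k \<sigma>) = []"
    and "length u = k \<Longrightarrow> \<sigma> u = [] \<longleftrightarrow> u = w_eps k \<sigma>"
    by blast+
qed

lemma block_per_word_Nil:
  assumes "length u = k" "0 < k"
  shows "block k (per_word [] u) j = u"
  using assms by (intro nth_equalityI) (auto simp: block_def per_word_def)

lemma f_sigma_eq_subst_val:
  assumes "erasing_subst k \<sigma>" "0 < k" "0 < y" "y \<le> 1"
    and "subst_prefix k \<sigma> (tilde y) n \<noteq> []"
  shows "f_sigma k \<sigma> y = subst_val k \<sigma> (tilde y)"
proof -
  have "tilde y \<noteq> per_word [] (w_eps k \<sigma>)"
    using assms(5) erasing_subst_w_eps(1,2)[OF assms(1)] block_per_word_Nil[OF _ assms(2)]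
    by (auto simp: subst_prefix_def)
  with assms(3,4) show ?thesis by (simp add: f_sigma_def)
qed

lemma f_sigma_tendsto:
  assumes er: "erasing_subst k \<sigma>" and k: "0 < k" and x: "0 < x" "x \<le> 1"
    and inf: "infinite {j. block k (tilde x) j \<noteq> w_eps k \<sigma>}"
    and cell: "\<And>n. \<forall>\<^sub>F y in F. 0 < y \<and> y \<le> 1 \<and> \<lceil>y * 2 ^ n\<rceil> = \<lceil>x * 2 ^ n\<rceil>"
  shows "(f_sigma k \<sigma> \<longlongrightarrow> f_sigma k \<sigma> x) F"
proof (rule tendstoI)
  fix e :: real assume "0 < e"
  then obtain m where m: "(1/2::real) ^ m < e" using real_arch_pow_inv[of e "1/2"] by auto
  have "{j. block k (tilde x) j \<noteq> w_eps k \<sigma>} = {j. \<sigma> (block k (tilde x) j) \<noteq> []}"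
    using erasing_subst_w_eps(3)[OF er] by (simp add: block_def)
  then obtain n where n: "Suc m \<le> length (subst_prefix k \<sigma> (tilde x) n)"
    using subst_prefix_length_unbounded inf by metis
  show "\<forall>\<^sub>F y in F. dist (f_sigma k \<sigma> y) (f_sigma k \<sigma> x) < e"
    using cell[of "n * k"]
  proof eventually_elim
    case (elim y)
    then have "subst_prefix k \<sigma> (tilde y) n = subst_prefix k \<sigma> (tilde x) n"
      using x tilde_agree[of y x "n * k"] by (intro subst_prefix_cong) auto
    moreover have "subst_prefix k \<sigma> (tilde x) n \<noteq> []" using n by auto
    ultimately have "f_sigma k \<sigma> y = subst_val k \<sigma> (tilde y)" "f_sigma k \<sigma> x = subst_val k \<sigma> (tilde x)"
      using elim x by (metis f_sigma_eq_subst_val[OF er k])+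
    then have "dist (f_sigma k \<sigma> y) (f_sigma k \<sigma> x) \<le> 1 / 2 ^ length (subst_prefix k \<sigma> (tilde x) n)"
      using subst_val_close \<open>subst_prefix k \<sigma> (tilde y) n = _\<close> by (simp add: dist_real_def)
    also have "\<dots> \<le> 1 / 2 ^ m"
      using n by (intro divide_left_mono power_increasing) auto
    finally show ?case using m by (simp add: power_one_over)
  qed
qed

subsection \<open>Dyadic intervals and exceptional points\<close>

lemma ceiling_scaled_eqI:
  fixes x y :: real
  assumes "0 < x" "of_int \<lceil>x * 2 ^ n\<rceil> - 1 < y * 2 ^ n" "y * 2 ^ n \<le> of_int \<lceil>x * 2 ^ n\<rceil>"
  shows "0 < y \<and> \<lceil>y * 2 ^ n\<rceil> = \<lceil>x * 2 ^ n\<rceil>"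
proof -
  have "0 < \<lceil>x * 2 ^ n\<rceil>" using assms(1) by simp
  then have "0 < y * 2 ^ n" using assms(2) by linarith
  then show ?thesis using assms(2,3) by (simp add: ceiling_eq_iff zero_less_mult_iff)
qed

lemma eventually_ceiling_scaled_left:
  fixes x :: real
  assumes "0 < x" "S \<subseteq> {..x}"
  shows "\<forall>\<^sub>F y in at x within S. 0 < y \<and> \<lceil>y * 2 ^ n\<rceil> = \<lceil>x * 2 ^ n\<rceil>"
proof -
  have "((\<lambda>y. y * 2 ^ n) \<longlongrightarrow> x * 2 ^ n) (at x within S)" by (intro tendsto_intros)
  moreover have "of_int \<lceil>x * 2 ^ n\<rceil> - 1 < x * 2 ^ n" by linarith
  ultimately have "\<forall>\<^sub>F y in at x within S. of_int \<lceil>x * 2 ^ n\<rceil> - 1 < y * 2 ^ n"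
    by (rule order_tendstoD)
  moreover have "\<forall>\<^sub>F y in at x within S. y \<le> x"
    unfolding eventually_at_filter by (rule always_eventually) (use assms(2) in auto)
  ultimately show ?thesis
  proof eventually_elim
    case (elim y)
    then have "y * 2 ^ n \<le> of_int \<lceil>x * 2 ^ n\<rceil>"
      by (meson le_of_int_ceiling mult_right_mono order_trans zero_le_numeral zero_le_power)
    with elim show ?case by (intro ceiling_scaled_eqI assms(1))
  qed
qed

lemma eventually_ceiling_scaled:
  fixes x :: real
  assumes "0 < x" "x * 2 ^ n \<notin> \<int>"
  shows "\<forall>\<^sub>F y in at x within S. 0 < y \<and> \<lceil>y * 2 ^ n\<rceil> = \<lceil>x * 2 ^ n\<rceil>"
proof -
  have lim: "((\<lambda>y. y * 2 ^ n) \<longlongrightarrow> x * 2 ^ n) (at x within S)" by (intro tendsto_intros)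
  have "of_int \<lceil>x * 2 ^ n\<rceil> - 1 < x * 2 ^ n" by linarith
  moreover have "x * 2 ^ n < of_int \<lceil>x * 2 ^ n\<rceil>"
    using assms(2) le_of_int_ceiling[of "x * 2 ^ n"] by (metis Ints_of_int order_le_less)
  ultimately have "\<forall>\<^sub>F y in at x within S. of_int \<lceil>x * 2 ^ n\<rceil> - 1 < y * 2 ^ n"
    "\<forall>\<^sub>F y in at x within S. y * 2 ^ n < of_int \<lceil>x * 2 ^ n\<rceil>"
    using order_tendstoD[OF lim] by blast+
  then show ?thesis
    by eventually_elim (intro ceiling_scaled_eqI assms(1), auto)
qed

lemma Q2_if_scaled_int:
  fixes x :: real
  assumes "0 \<le> x" "x \<le> 1" "x * 2 ^ n \<in> \<int>"
  shows "x \<in> Q2"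
proof -
  obtain z where z: "x * 2 ^ n = of_int z" using assms(3) by (auto elim: Ints_cases)
  then have "0 \<le> z" using assms(1) by (metis of_int_0_le_iff zero_le_mult_iff zero_le_numeral zero_le_power)
  then have "x = real (nat z) / 2 ^ n" using z by (simp add: field_simps)
  with assms(1,2) show ?thesis unfolding Q2_def by auto
qed

text \<open>Eventually periodic expansions have rational values: shifting \<open>v u\<^sup>\<infinity>\<close> by \<open>|v|\<close> and
  by \<open>|v| + |u|\<close> gives the same tail, which yields a linear equation for the value.\<close>
lemma bin_val_inf_per_word_Rats:
  assumes "u \<noteq> []"
  shows "bin_val_inf (per_word v u) \<in> \<rat>"
proof -
  define w where "w = per_word v u"
  define a where "a = length v"
  define b where "b = length u"
  define x where "x = bin_val_inf w"
  define T where "T = bin_val_inf (\<lambda>i. w (i + a))"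
  have prefix_Rats: "bin_val_prefix w n \<in> \<rat>" for n
    unfolding bin_val_prefix_def bit_def by (intro Rats_sum) auto
  have "(\<lambda>i. w (i + (a + b))) = (\<lambda>i. w (i + a))"
    by (simp add: w_def per_word_def a_def b_def)
  then have "x = bin_val_prefix w (a + b) + T / 2 ^ a / 2 ^ b"
    using bin_val_inf_split[of w "a + b"] by (simp add: x_def T_def power_add)
  also have "T / 2 ^ a = x - bin_val_prefix w a"
    using bin_val_inf_split[of w a] by (simp add: x_def T_def)
  finally have "x * (2 ^ b - 1) = bin_val_prefix w (a + b) * 2 ^ b - bin_val_prefix w a"
    by (simp add: field_simps)
  moreover have "(1::real) < 2 ^ b" using assms by (simp add: b_def one_less_power)
  ultimately have "x = (bin_val_prefix w (a + b) * 2 ^ b - bin_val_prefix w a) / (2 ^ b - 1)"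
    by (simp add: eq_divide_eq)
  also have "\<dots> \<in> \<rat>" using prefix_Rats by (intro Rats_divide Rats_diff Rats_mult Rats_power Rats_1) auto
  finally show ?thesis unfolding x_def w_def .
qed

lemma eq_per_word_if_blocks_eventually_const:
  assumes "0 < k" "length u = k" "\<And>j. n \<le> j \<Longrightarrow> block k w j = u"
  shows "w = per_word (map w [0..<n * k]) u"
proof
  fix i
  show "w i = per_word (map w [0..<n * k]) u i"
  proof (cases "i < n * k")
    case False
    then have "n * k div k \<le> i div k" by (intro div_le_mono) simp
    then have "n \<le> i div k" using assms(1) by simp
    then have "block k w (i div k) = u" by (rule assms(3))
    then have "u ! (i mod k) = w (k * (i div k) + i mod k)"
      using assms(1) by (auto simp: block_def)
    then have "w i = u ! (i mod k)" by simp
    moreover have "(i - n * k) mod k = i mod k"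
      using False by (metis le_add_diff_inverse2 mod_mult_self1 not_less)
    ultimately show ?thesis using False assms(2) by (simp add: per_word_def)
  qed (simp add: per_word_def)
qed

lemma infinite_non_erased_blocks:
  assumes er: "erasing_subst k \<sigma>" and k: "0 < k" and x: "0 < x" "x \<le> 1"
    and "x \<notin> E_sigma k \<sigma>"
  shows "infinite {j. block k (tilde x) j \<noteq> w_eps k \<sigma>}"
proof
  assume "finite {j. block k (tilde x) j \<noteq> w_eps k \<sigma>}"
  then obtain n where "\<forall>j \<in> {j. block k (tilde x) j \<noteq> w_eps k \<sigma>}. j < n"
    using finite_nat_set_iff_bounded by blast
  then have "\<And>j. n \<le> j \<Longrightarrow> block k (tilde x) j = w_eps k \<sigma>" by force
  then have "tilde x = per_word (map (tilde x) [0..<n * k]) (w_eps k \<sigma>)"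
    using eq_per_word_if_blocks_eventually_const[OF k erasing_subst_w_eps(1)[OF er]] by blast
  then have xv: "x = bin_val_inf (per_word (map (tilde x) [0..<n * k]) (w_eps k \<sigma>))"
    using tilde_expansion(2)[OF x] by simp
  moreover have "w_eps k \<sigma> \<noteq> []" using erasing_subst_w_eps(1)[OF er] k by auto
  ultimately have "x \<in> \<rat>" by (subst xv) (rule bin_val_inf_per_word_Rats)
  with x xv have "x \<in> E_sigma k \<sigma>"
    unfolding E_sigma_def by (auto intro!: exI[of _ "map (tilde x) [0..<n * k]"] exI[of _ n])
  with assms(5) show False by simp
qed

lemma tilde_dyadic_eventually_True:
  assumes "0 < x" "x \<le> 1" "x * 2 ^ n \<in> \<int>" "n \<le> i"
  shows "tilde x i"
proof -
  have "x * 2 ^ i = x * 2 ^ n * 2 ^ (i - n)"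
    using assms(4) by (simp add: mult.assoc flip: power_add)
  also have "\<dots> \<in> \<int>" by (rule Ints_mult[OF assms(3) Ints_power]) simp
  finally have "x * 2 ^ i \<in> \<int>" .
  then obtain z where z: "x * 2 ^ i = of_int z" by (auto elim: Ints_cases)
  moreover have "x * 2 ^ Suc i = of_int (2 * z)" using z by simp
  ultimately show ?thesis
    unfolding tilde_eq_bin_digit[OF assms(1,2)] bin_digit_def by (simp only: ceiling_of_int)
qed

lemma infinite_non_erased_blocks_Q2:
  assumes k: "0 < k" and q: "q \<in> Q2" "q \<noteq> 0" and ne: "w_eps k \<sigma> \<noteq> replicate k True"
  shows "infinite {j. block k (tilde q) j \<noteq> w_eps k \<sigma>}"
proof -
  obtain m n :: nat where qm: "q = real m / 2 ^ n" and q01: "0 < q" "q \<le> 1"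
    using q unfolding Q2_def by auto
  have "q * 2 ^ n \<in> \<int>" unfolding qm by simp
  moreover have "n \<le> k * j + i" if "n \<le> j" for i j
  proof -
    have "j \<le> k * j" using k by simp
    with that show ?thesis by linarith
  qed
  ultimately have "block k (tilde q) j = replicate k True" if "n \<le> j" for j
    using that tilde_dyadic_eventually_True[OF q01] by (intro nth_equalityI) (auto simp: block_def)
  then have "{n..} \<subseteq> {j. block k (tilde q) j \<noteq> w_eps k \<sigma>}" using ne by auto
  then show ?thesis using infinite_Ici infinite_super by blast
qed

subsection \<open>Baire class 1 by piecewise-linear interpolation\<close>

text \<open>Piecewise-linear interpolation through a finite set of nodes in \<open>[0,1]\<close>; the values
  \<open>-1\<close> and \<open>2\<close> stand for a missing neighbouring node.\<close>

definition prev_node :: "real set \<Rightarrow> real \<Rightarrow> real" where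
  "prev_node S s = Max (insert (-1) {y\<in>S. y < s})"

definition next_node :: "real set \<Rightarrow> real \<Rightarrow> real" where
  "next_node S s = Min (insert 2 {y\<in>S. s < y})"

definition hat_fun :: "real set \<Rightarrow> real \<Rightarrow> real \<Rightarrow> real" where
  "hat_fun S s x = max 0 (min ((x - prev_node S s) / (s - prev_node S s))
                              ((next_node S s - x) / (next_node S s - s)))"

definition pl_interp :: "real set \<Rightarrow> (real \<Rightarrow> real) \<Rightarrow> real \<Rightarrow> real" where
  "pl_interp S f x = (\<Sum>s\<in>S. f s * hat_fun S s x)"

context
  fixes S :: "real set"
  assumes fin: "finite S" and sub: "S \<subseteq> {0..1}"
begin

lemma prev_node_less: "s \<in> S \<Longrightarrow> prev_node S s < s"
proof -
  assume s: "s \<in> S"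
  have "prev_node S s \<in> insert (-1) {y\<in>S. y < s}"
    unfolding prev_node_def by (rule Max_in) (use fin in auto)
  then show ?thesis using s sub by auto
qed

lemma next_node_greater: "s \<in> S \<Longrightarrow> s < next_node S s"
proof -
  assume s: "s \<in> S"
  have "next_node S s \<in> insert 2 {y\<in>S. s < y}"
    unfolding next_node_def by (rule Min_in) (use fin in auto)
  then show ?thesis using s sub by auto
qed

lemma prev_node_ge: "y \<in> S \<Longrightarrow> y < s \<Longrightarrow> y \<le> prev_node S s"
  unfolding prev_node_def by (rule Max_ge) (use fin in auto)

lemma next_node_le: "y \<in> S \<Longrightarrow> s < y \<Longrightarrow> next_node S s \<le> y"
  unfolding next_node_def by (rule Min_le) (use fin in auto)

lemma prev_node_eqI:
  assumes "a \<in> S" "b \<in> S" "a < b" "\<forall>s\<in>S. s \<le> a \<or> b \<le> s"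
  shows "prev_node S b = a"
proof (rule antisym)
  have "prev_node S b \<in> insert (-1) {y\<in>S. y < b}"
    unfolding prev_node_def by (rule Max_in) (use fin in auto)
  then show "prev_node S b \<le> a" using assms sub by auto
qed (use prev_node_ge assms in auto)

lemma next_node_eqI:
  assumes "a \<in> S" "b \<in> S" "a < b" "\<forall>s\<in>S. s \<le> a \<or> b \<le> s"
  shows "next_node S a = b"
proof (rule antisym)
  have "next_node S a \<in> insert 2 {y\<in>S. a < y}"
    unfolding next_node_def by (rule Min_in) (use fin in auto)
  then show "b \<le> next_node S a" using assms sub by auto
qed (use next_node_le assms in auto)

lemma hat_fun_eq_0:
  assumes "s \<in> S" "next_node S s \<le> x \<or> x \<le> prev_node S s"
  shows "hat_fun S s x = 0"
proof -
  have "0 < s - prev_node S s" "0 < next_node S s - s"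
    using prev_node_less[OF assms(1)] next_node_greater[OF assms(1)] by auto
  then have "min ((x - prev_node S s) / (s - prev_node S s))
                 ((next_node S s - x) / (next_node S s - s)) \<le> 0"
    using assms(2) by (auto simp: divide_nonpos_pos min_le_iff_disj)
  then show ?thesis unfolding hat_fun_def by simp
qed

lemma continuous_on_pl_interp: "continuous_on UNIV (pl_interp S f)"
proof -
  have "s - prev_node S s \<noteq> 0" "next_node S s - s \<noteq> 0" if "s \<in> S" for s
    using prev_node_less[OF that] next_node_greater[OF that] by auto
  then show ?thesis
    unfolding pl_interp_def hat_fun_def by (intro continuous_intros) auto
qed

lemma pl_interp_node:
  assumes x: "x \<in> S"
  shows "pl_interp S f x = f x"
proof -
  have "hat_fun S x x = 1"
    using prev_node_less[OF x] next_node_greater[OF x] unfolding hat_fun_def by simp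
  moreover have "hat_fun S s x = 0" if "s \<in> S - {x}" for s
    using that hat_fun_eq_0 next_node_le[OF x] prev_node_ge[OF x] by (cases "s < x") auto
  ultimately show ?thesis unfolding pl_interp_def
    using sum.remove[OF fin x, of "\<lambda>s. f s * hat_fun S s x"] by simp
qed

lemma pl_interp_between:
  assumes a: "a \<in> S" and b: "b \<in> S" and ax: "a < x" and xb: "x < b"
    and gap: "\<forall>s\<in>S. s \<le> a \<or> b \<le> s"
  shows "pl_interp S f x = f a * ((b - x) / (b - a)) + f b * ((x - a) / (b - a))"
proof -
  have ab: "a < b" using ax xb by simp
  have "hat_fun S a x = (b - x) / (b - a)"
  proof -
    have "1 \<le> (x - prev_node S a) / (a - prev_node S a)" using prev_node_less[OF a] ax by simp
    moreover have "0 \<le> (b - x) / (b - a)" "(b - x) / (b - a) \<le> 1" using ax xb by simp_all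
    ultimately show ?thesis
      unfolding hat_fun_def next_node_eqI[OF a b ab gap] by (simp add: min_absorb2 max_absorb2)
  qed
  moreover have "hat_fun S b x = (x - a) / (b - a)"
  proof -
    have "1 \<le> (next_node S b - x) / (next_node S b - b)" using next_node_greater[OF b] xb by simp
    moreover have "0 \<le> (x - a) / (b - a)" "(x - a) / (b - a) \<le> 1" using ax xb by simp_all
    ultimately show ?thesis
      unfolding hat_fun_def prev_node_eqI[OF a b ab gap] by (simp add: min_absorb1 max_absorb2)
  qed
  moreover have "hat_fun S s x = 0" if "s \<in> S - {a, b}" for s
  proof (cases "s < x")
    case True
    then have "next_node S s \<le> a" using that gap next_node_le[OF a] xb by force
    then show ?thesis using that ax by (intro hat_fun_eq_0) auto
  next
    case False
    then have "b \<le> prev_node S s" using that gap prev_node_ge[OF b] ax by force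
    then show ?thesis using that xb by (intro hat_fun_eq_0) auto
  qed
  ultimately show ?thesis
    using sum.subset_diff[of "{a, b}" S "\<lambda>s. f s * hat_fun S s x"] fin a b ab
    by (simp add: pl_interp_def)
qed


lemma exists_adjacent_nodes:
  assumes "x \<in> {0..1}" "x \<notin> S" "0 \<in> S" "1 \<in> S"
  shows "\<exists>a b. a \<in> S \<and> b \<in> S \<and> a < x \<and> x < b \<and> (\<forall>s\<in>S. s \<le> a \<or> b \<le> s)"
proof -
  define a where "a = Max {s\<in>S. s \<le> x}"
  define b where "b = Min {s\<in>S. x \<le> s}"
  have a: "a \<in> {s\<in>S. s \<le> x}" unfolding a_def by (rule Max_in) (use fin assms in auto)
  have b: "b \<in> {s\<in>S. x \<le> s}" unfolding b_def by (rule Min_in) (use fin assms in auto)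
  have "s \<le> a \<or> b \<le> s" if "s \<in> S" for s
    using that fin unfolding a_def b_def by (cases "s \<le> x") (auto intro: Max_ge Min_le)
  with a b assms(2) show ?thesis by (auto simp: order_le_less)
qed

lemma pl_interp_approx:
  assumes "x \<in> {0..1}" "0 \<in> S" "1 \<in> S" "0 < r"
    and mesh: "\<And>a b. a \<in> S \<Longrightarrow> b \<in> S \<Longrightarrow> a < x \<Longrightarrow> x < b \<Longrightarrow> \<forall>s\<in>S. s \<le> a \<or> b \<le> s \<Longrightarrow> b - a < d"
    and close: "\<And>y. y \<in> S \<Longrightarrow> \<bar>y - x\<bar> < d \<Longrightarrow> \<bar>f y - f x\<bar> < r"
  shows "\<bar>pl_interp S f x - f x\<bar> < r"
proof (cases "x \<in> S")
  case True
  then show ?thesis using pl_interp_node assms(4) by simp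
next
  case False
  then obtain a b where ab: "a \<in> S" "b \<in> S" "a < x" "x < b" "\<forall>s\<in>S. s \<le> a \<or> b \<le> s"
    using exists_adjacent_nodes assms(1-3) by blast
  then have "b - a < d" by (rule mesh)
  then have fa: "\<bar>f a - f x\<bar> < r" and fb: "\<bar>f b - f x\<bar> < r" using ab close by auto
  define t where "t = (x - a) / (b - a)"
  have t: "0 \<le> t" "t \<le> 1" using ab by (simp_all add: t_def)
  have "(b - x) / (b - a) = 1 - t" using ab(3,4) by (simp add: t_def field_simps)
  then have "pl_interp S f x - f x = (f a - f x) * (1 - t) + (f b - f x) * t"
    by (simp add: pl_interp_between[OF ab] flip: t_def) (simp add: algebra_simps)
  also have "\<bar>\<dots>\<bar> \<le> \<bar>f a - f x\<bar> * (1 - t) + \<bar>f b - f x\<bar> * t"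
    using t by (simp add: abs_mult abs_triangle_ineq[THEN order_trans])
  also have "\<dots> < r * (1 - t) + r * t"
  proof (cases "t = 0")
    case False
    then show ?thesis
      using t fa fb by (intro add_le_less_mono mult_right_mono mult_strict_right_mono) auto
  qed (use fa in simp)
  finally show ?thesis by (simp add: algebra_simps)
qed

end


lemma adjacent_nodes_gap_le:
  assumes grid: "\<And>j. j \<le> 2 ^ n \<Longrightarrow> real j / 2 ^ n \<in> S" and "0 \<le> a" "a < 1"
    and gap: "\<forall>s\<in>S. s \<le> a \<or> b \<le> s"
  shows "b - a \<le> 1 / 2 ^ n"
proof -
  define j where "j = nat \<lfloor>a * 2 ^ n\<rfloor> + 1"
  have j: "real j = of_int \<lfloor>a * 2 ^ n\<rfloor> + 1" using assms(2) by (simp add: j_def)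
  have "\<lfloor>a * 2 ^ n\<rfloor> < int (2 ^ n)" "0 \<le> \<lfloor>a * 2 ^ n\<rfloor>"
    using assms(2,3) by (simp_all add: floor_less_iff)
  then have "j \<le> 2 ^ n" unfolding j_def by linarith
  then have "real j / 2 ^ n \<in> S" by (rule grid)
  moreover have "a < real j / 2 ^ n" "real j / 2 ^ n \<le> a + 1 / 2 ^ n"
    unfolding j by (simp_all add: field_simps) linarith+
  ultimately show ?thesis using gap by force
qed

text \<open>The approximants interpolate \<open>f\<close> on finer and finer dyadic grids, enlarged by the
  first \<open>n\<close> points of an enumeration of \<open>D\<close>: at points of \<open>D\<close> they are eventually exact,
  at continuity points the mesh tends to zero.\<close>
lemma baire_class_1_if_continuous_off_countable:
  fixes f :: "real \<Rightarrow> real"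
  assumes "countable D" and cont: "\<And>x. x \<in> {0..1} - D \<Longrightarrow> continuous (at x within {0..1}) f"
  shows "baire_class_1 f"
proof -
  define e where "e = from_nat_into (insert 0 D)"
  have D_e: "D \<subseteq> range e"
    using range_from_nat_into[of "insert 0 D"] assms(1) by (auto simp: e_def)
  define S where "S n = (\<lambda>j. real j / 2 ^ n) ` {..2 ^ n} \<union> ({0..1} \<inter> e ` {..n})" for n :: nat
  have fin: "finite (S n)" for n by (simp add: S_def)
  have grid: "real j / 2 ^ n \<in> S n" if "j \<le> 2 ^ n" for j n
    using that by (auto simp: S_def)
  have "real j / 2 ^ n \<le> 1" if "j \<le> 2 ^ n" for j n :: nat
    using that by (simp add: field_simps)
  then have sub: "S n \<subseteq> {0..1}" for n by (auto simp: S_def)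
  have "0 \<in> S n" "1 \<in> S n" for n using grid[of 0 n] grid[of "2 ^ n" n] by simp_all
  note nodes = this
  define g where "g n = pl_interp (S n) f" for n
  have "continuous_on {0..1} (g n)" for n
    unfolding g_def using continuous_on_pl_interp[OF fin sub] continuous_on_subset by blast
  moreover have "(\<lambda>n. g n x) \<longlonglongrightarrow> f x" if x: "x \<in> {0..1}" for x
  proof (cases "x \<in> D")
    case True
    then obtain m where "e m = x" using D_e by blast
    then have "x \<in> S n" if "m \<le> n" for n using that x by (auto simp: S_def)
    then have "\<forall>\<^sub>F n in sequentially. g n x = f x"
      unfolding eventually_sequentially g_def using pl_interp_node[OF fin sub] by blast
    then show ?thesis by (rule tendsto_eventually)
  next
    case False
    show ?thesis
    proof (rule LIMSEQ_I)
      fix r :: real assume r: "0 < r"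
      obtain d where d: "0 < d" "\<And>y. y \<in> {0..1} \<Longrightarrow> dist y x < d \<Longrightarrow> dist (f y) (f x) < r"
        using cont[of x] x False r unfolding continuous_within_eps_delta by blast
      obtain N where N: "(1/2::real) ^ N < d" using real_arch_pow_inv[OF d(1), of "1/2"] by auto
      have "\<bar>g n x - f x\<bar> < r" if "N \<le> n" for n
        unfolding g_def
      proof (rule pl_interp_approx[OF fin sub x nodes r])
        fix a b assume ab: "a \<in> S n" "a < x" "\<forall>s\<in>S n. s \<le> a \<or> b \<le> s"
        have "b - a \<le> 1 / 2 ^ n"
          using ab sub[of n] x by (intro adjacent_nodes_gap_le[OF grid]) auto
        also have "\<dots> \<le> 1 / 2 ^ N"
          using that by (intro divide_left_mono power_increasing) auto
        finally show "b - a < d" using N by (simp add: power_one_over)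
      next
        fix y assume "y \<in> S n" "\<bar>y - x\<bar> < d"
        then show "\<bar>f y - f x\<bar> < r" using d(2) sub[of n] by (auto simp: dist_real_def)
      qed
      then show "\<exists>N. \<forall>n\<ge>N. norm (g n x - f x) < r" by auto
    qed
  qed
  ultimately show ?thesis unfolding baire_class_1_def by blast
qed


subsection \<open>Continuity of \<open>f\<^sub>\<sigma>\<close>\<close>

lemma eventually_at_within_mem: "\<forall>\<^sub>F y in at x within S. y \<in> S"
  unfolding eventually_at_filter by simp

lemma continuous_f_sigma_C_sigma:
  assumes er: "erasing_subst k \<sigma>" and k: "0 < k" and xC: "x \<in> C_sigma k \<sigma>"
  shows "continuous (at x within {0..1}) (f_sigma k \<sigma>)"
proof -
  have x01: "x \<in> {0..1}" and nQ: "x \<notin> Q2_0" and nE: "x \<notin> E_sigma k \<sigma>"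
    using xC unfolding C_sigma_def by auto
  then have x: "0 < x" "x \<le> 1" by (auto simp: Q2_0_def)
  have cell: "\<forall>\<^sub>F y in at x within {0..1}. 0 < y \<and> \<lceil>y * 2 ^ n\<rceil> = \<lceil>x * 2 ^ n\<rceil>" for n
  proof (cases "x = 1")
    case True
    then show ?thesis using x by (intro eventually_ceiling_scaled_left) auto
  next
    case False
    then have "x * 2 ^ n \<notin> \<int>"
      using nQ x Q2_if_scaled_int[of x n] by (auto simp: Q2_0_def)
    then show ?thesis using x by (intro eventually_ceiling_scaled)
  qed
  have "\<forall>\<^sub>F y in at x within {0..1}. 0 < y \<and> y \<le> 1 \<and> \<lceil>y * 2 ^ n\<rceil> = \<lceil>x * 2 ^ n\<rceil>" for n
    by (rule eventually_mono[OF eventually_conj[OF cell eventually_at_within_mem]]) auto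
  then show ?thesis
    unfolding continuous_within
    using f_sigma_tendsto[OF er k x infinite_non_erased_blocks[OF er k x nE]] by blast
qed

lemma continuous_at_left_f_sigma_Q2:
  assumes er: "erasing_subst k \<sigma>" and k: "0 < k" and ne: "w_eps k \<sigma> \<noteq> replicate k True"
    and q: "q \<in> Q2" "q \<noteq> 0"
  shows "continuous (at_left q) (f_sigma k \<sigma>)"
proof -
  have q01: "0 < q" "q \<le> 1" using q by (auto simp: Q2_def)
  have cell: "\<forall>\<^sub>F y in at_left q. 0 < y \<and> \<lceil>y * 2 ^ n\<rceil> = \<lceil>q * 2 ^ n\<rceil>" for n
    using q01 by (intro eventually_ceiling_scaled_left) auto
  have "\<forall>\<^sub>F y in at_left q. 0 < y \<and> y \<le> 1 \<and> \<lceil>y * 2 ^ n\<rceil> = \<lceil>q * 2 ^ n\<rceil>" for n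
    by (rule eventually_mono[OF eventually_conj[OF cell eventually_at_within_mem]]) (use q01 in auto)
  then show ?thesis
    unfolding continuous_within
    using f_sigma_tendsto[OF er k q01 infinite_non_erased_blocks_Q2[OF k q ne]] by blast
qed

lemma countable_complement_C_sigma: "countable ({0..1} - C_sigma k \<sigma>)"
proof (rule countable_subset[OF _ countable_rat])
  have "Q2 \<subseteq> \<rat>" by (auto simp: Q2_def)
  then show "{0..1} - C_sigma k \<sigma> \<subseteq> \<rat>"
    unfolding C_sigma_def Q2_0_def E_sigma_def by auto
qed

theorem lemma3p2:
  fixes k :: nat and \<sigma> :: "bool list \<Rightarrow> bool list"
  assumes "k \<ge> 2"
    and "erasing_subst k \<sigma>"
    and "w_eps k \<sigma> \<noteq> replicate k True"
  shows "(\<forall>x \<in> C_sigma k \<sigma>. continuous (at x within {0..1}) (f_sigma k \<sigma>))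
       \<and> countable ({0..1} - C_sigma k \<sigma>)
       \<and> baire_class_1 (f_sigma k \<sigma>)
       \<and> (\<forall>q \<in> Q2 - {0}. continuous (at_left q) (f_sigma k \<sigma>))"
proof -
  have k: "0 < k" using assms(1) by simp
  have cont: "\<forall>x \<in> C_sigma k \<sigma>. continuous (at x within {0..1}) (f_sigma k \<sigma>)"
    using continuous_f_sigma_C_sigma[OF assms(2) k] by blast
  moreover have "baire_class_1 (f_sigma k \<sigma>)"
    using cont by (intro baire_class_1_if_continuous_off_countable[OF countable_complement_C_sigma]) auto
  ultimately show ?thesis
    using countable_complement_C_sigma continuous_at_left_f_sigma_Q2[OF assms(2) k assms(3)] by blast
qed

end
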